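(* Let $\ell,c,d\in\mathbb{N}$ and let $\beta$ be a $(c,d)$-disjointed $\ell$-covering of a graph $G$. Then $\beta$ is $(c,f)$-disjointed, where $f(t):=d\,t^c$ for each $t\in\mathbb{N}$.
   Context: Graphs are finite, simple and undirected. For a set $B\subseteq V(G)$, $N_G(B)$ is the set of vertices of $G$ adjacent to some vertex of $B$ (so $N_G(\emptyset)=\emptyset$). An $\ell$-covering of $G$ is a set $\beta\subseteq 2^{V(G)}$ with $|B|\le \ell$ for all $B\in\beta$ and $\bigcup_{B\in\beta}B=V(G)$. For $c\in\mathbb{N}_0$ and $d\ge 0$, a covering $\beta$ is $(c,d)$-disjointed if for every $c$-tuple $(B_1,\dots,B_c)\in\beta^c$ and every connected component $X$ of $G-(B_1\cup\dots\cup B_c)$ there is $Q\subseteq V(X)$ with $|Q|\le d$ such that for every connected component $Y$ of $X-Q$ there is $i\in\{1,\dots,c\}$ with $V(Y)\cap N_G(B_i')=\emptyset$, where $B_i':=B_i\setminus(B_1\cup\dots\cup B_{i-1})$. For $t\in\mathbb{N}$, $\beta[t]:=\{\bigcup\mathcal{B} : \mathcal{B}\subseteq\beta, |\mathcal{B}|\le t\}$. For $f:\mathbb{N}\to\mathbb{R}^+$, $\beta$ is $(c,f)$-disjointed if $\beta[t]$ is $(c,f(t))$-disjointed for every $t\in\mathbb{N}$. *)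

theory Defs
  imports Complex_Main
begin

definition simple_graph :: "'a set \<Rightarrow> ('a \<Rightarrow> 'a \<Rightarrow> bool) \<Rightarrow> bool" where
  "simple_graph V E \<longleftrightarrow> finite V \<and> (\<forall>x y. E x y \<longrightarrow> E y x) \<and> (\<forall>x. \<not> E x x)
     \<and> (\<forall>x y. E x y \<longrightarrow> x \<in> V \<and> y \<in> V)"

definition nbhd :: "'a set \<Rightarrow> ('a \<Rightarrow> 'a \<Rightarrow> bool) \<Rightarrow> 'a set \<Rightarrow> 'a set" where
  "nbhd V E B = {v \<in> V. \<exists>b\<in>B. E b v}"

definition components :: "('a \<Rightarrow> 'a \<Rightarrow> bool) \<Rightarrow> 'a set \<Rightarrow> 'a set set" where
  "components E S = (\<lambda>x. {y. (\<lambda>u v. E u v \<and> u \<in> S \<and> v \<in> S)\<^sup>*\<^sup>* x y}) ` S"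

definition covering :: "'a set \<Rightarrow> nat \<Rightarrow> 'a set set \<Rightarrow> bool" where
  "covering V l \<beta> \<longleftrightarrow> \<beta> \<subseteq> Pow V \<and> (\<forall>B\<in>\<beta>. card B \<le> l) \<and> \<Union>\<beta> = V"

text \<open>(c,d)-disjointedness; a c-tuple is a function on indices 0..c-1.\<close>
definition disjointed ::
  "'a set \<Rightarrow> ('a \<Rightarrow> 'a \<Rightarrow> bool) \<Rightarrow> nat \<Rightarrow> real \<Rightarrow> 'a set set \<Rightarrow> bool" where
  "disjointed V E c d \<beta> \<longleftrightarrow>
    (\<forall>Bs :: nat \<Rightarrow> 'a set. (\<forall>i<c. Bs i \<in> \<beta>) \<longrightarrow>
      (\<forall>X \<in> components E (V - (\<Union>i<c. Bs i)).
        \<exists>Q \<subseteq> X. real (card Q) \<le> d \<and>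
          (\<forall>Y \<in> components E (X - Q).
             \<exists>i<c. Y \<inter> nbhd V E (Bs i - (\<Union>j<i. Bs j)) = {})))"

definition union_family :: "'a set set \<Rightarrow> nat \<Rightarrow> 'a set set" where
  "union_family \<beta> t = {\<Union>\<B> | \<B>. \<B> \<subseteq> \<beta> \<and> card \<B> \<le> t}"

definition disjointed_fun ::
  "'a set \<Rightarrow> ('a \<Rightarrow> 'a \<Rightarrow> bool) \<Rightarrow> nat \<Rightarrow> (nat \<Rightarrow> real) \<Rightarrow> 'a set set \<Rightarrow> bool" where
  "disjointed_fun V E c f \<beta> \<longleftrightarrow> (\<forall>t\<ge>1. disjointed V E c (f t) (union_family \<beta> t))"

end

theory Submission
  imports Defs "HOL-Library.FuncSet"
begin

text \<open>Write each member of \<open>\<beta>[t]\<close> in a \<open>c\<close>-tuple as a union \<open>\<Union>(F i)\<close> of at most \<open>t\<close> members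
  of \<open>\<beta>\<close>. Every choice function \<open>\<tau> \<in> \<Pi> i. F i\<close>, of which there are at most \<open>t^c\<close>, is a
  \<open>c\<close>-tuple of \<open>\<beta>\<close> with \<open>\<tau> i \<subseteq> B\<^sub>i\<close>; so a component \<open>X\<close> of \<open>G - \<Union>B\<^sub>i\<close> lies in a component of
  \<open>G - \<Union>\<tau> i\<close>, which has a separator \<open>Q\<^sub>\<tau>\<close> of size \<open>d\<close>. Take \<open>Q := X \<inter> \<Union>\<^sub>\<tau> Q\<^sub>\<tau>\<close>.
  If a component \<open>Y\<close> of \<open>X - Q\<close> met every \<open>N(B\<^sub>i')\<close>, then choosing for each \<open>i\<close> a member of
  \<open>F i\<close> responsible for this contact gives a \<open>\<tau>\<close> such that \<open>Y\<close> meets every \<open>N(\<tau>\<^sub>i')\<close>,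
  although \<open>Y\<close> lies in a component of the \<open>\<tau>\<close>-separated graph that avoids one of them.\<close>

lemma nbhd_mono: "A \<subseteq> B \<Longrightarrow> nbhd V E A \<subseteq> nbhd V E B"
  unfolding nbhd_def by auto

lemma component_subset:
  assumes "C \<in> components E S"
  shows "C \<subseteq> S"
proof
  fix y assume "y \<in> C"
  with assms obtain x where "x \<in> S" and "(\<lambda>u v. E u v \<and> u \<in> S \<and> v \<in> S)\<^sup>*\<^sup>* x y"
    unfolding components_def by blast
  from this(2) show "y \<in> S" by (induction rule: rtranclp_induct) (use \<open>x \<in> S\<close> in auto)
qed

lemma component_in_supset_component:
  assumes "C \<in> components E S" and "S \<subseteq> S'"
  obtains C' where "C' \<in> components E S'" and "C \<subseteq> C'"
proof -
  obtain x where x: "x \<in> S" and C: "C = {y. (\<lambda>u v. E u v \<and> u \<in> S \<and> v \<in> S)\<^sup>*\<^sup>* x y}"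
    using assms(1) unfolding components_def by blast
  define C' where "C' = {y. (\<lambda>u v. E u v \<and> u \<in> S' \<and> v \<in> S')\<^sup>*\<^sup>* x y}"
  have "C' \<in> components E S'" unfolding C'_def components_def using x assms(2) by blast
  moreover have "C \<subseteq> C'"
  proof
    fix y assume "y \<in> C"
    then have "(\<lambda>u v. E u v \<and> u \<in> S \<and> v \<in> S)\<^sup>*\<^sup>* x y" by (simp add: C)
    then show "y \<in> C'" unfolding C'_def
      by (induction rule: rtranclp_induct) (use assms(2) in \<open>auto intro: rtranclp.rtrancl_into_rtrancl\<close>)
  qed
  ultimately show ?thesis by (rule that)
qed

lemma card_UN_le_mult:
  assumes "finite T" and "\<And>x. x \<in> T \<Longrightarrow> real (card (A x)) \<le> d"
  shows "real (card (\<Union>x\<in>T. A x)) \<le> real (card T) * d"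
proof -
  have "card (\<Union>x\<in>T. A x) \<le> (\<Sum>x\<in>T. card (A x))" by (rule card_UN_le[OF assms(1)])
  then have "real (card (\<Union>x\<in>T. A x)) \<le> (\<Sum>x\<in>T. real (card (A x)))"
    by (metis of_nat_le_iff of_nat_sum)
  also have "\<dots> \<le> real (card T) * d" by (rule sum_bounded_above) (rule assms(2))
  finally show ?thesis .
qed

lemma card_PiE_lessThan_le_pow:
  assumes "\<And>i. i < c \<Longrightarrow> card (F i) \<le> t"
  shows "card (PiE {..<c} F) \<le> t ^ c"
proof -
  have "card (PiE {..<c} F) = (\<Prod>i<c. card (F i))" by (simp add: card_PiE)
  also have "\<dots> \<le> (\<Prod>i<c. t)" by (rule prod_mono) (use assms in auto)
  finally show ?thesis by simp
qed

lemma meets_nbhd_choice: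
  fixes c :: nat
  assumes "\<And>i. i < c \<Longrightarrow> Bs i = \<Union>(F i)"
    and "\<And>i. i < c \<Longrightarrow> Y \<inter> nbhd V E (Bs i - (\<Union>j<i. Bs j)) \<noteq> {}"
  shows "\<exists>\<tau>\<in>PiE {..<c} F. \<forall>i<c. Y \<inter> nbhd V E (\<tau> i - (\<Union>j<i. \<tau> j)) \<noteq> {}"
proof -
  have "\<exists>A \<in> F i. Y \<inter> nbhd V E (A - (\<Union>j<i. Bs j)) \<noteq> {}" if i: "i < c" for i
  proof -
    obtain v b where "v \<in> Y" "v \<in> V" "b \<in> Bs i" "b \<notin> (\<Union>j<i. Bs j)" "E b v"
      using assms(2)[OF i] unfolding nbhd_def by blast
    with assms(1)[OF i] show ?thesis unfolding nbhd_def by blast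
  qed
  then obtain g where g: "\<And>i. i < c \<Longrightarrow> g i \<in> F i \<and> Y \<inter> nbhd V E (g i - (\<Union>j<i. Bs j)) \<noteq> {}"
    by metis
  define \<tau> where "\<tau> = restrict g {..<c}"
  have "\<tau> \<in> PiE {..<c} F" unfolding \<tau>_def using g by auto
  moreover have "Y \<inter> nbhd V E (\<tau> i - (\<Union>j<i. \<tau> j)) \<noteq> {}" if "i < c" for i
  proof -
    have "\<tau> j \<subseteq> Bs j" if "j < i" for j
    proof -
      have "j < c" using that \<open>i < c\<close> by linarith
      then show ?thesis using g assms(1) by (auto simp: \<tau>_def)
    qed
    moreover have "\<tau> i = g i" using \<open>i < c\<close> by (simp add: \<tau>_def)
    ultimately have "g i - (\<Union>j<i. Bs j) \<subseteq> \<tau> i - (\<Union>j<i. \<tau> j)" by blast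
    from nbhd_mono[OF this] g[OF \<open>i < c\<close>] show ?thesis by blast
  qed
  ultimately show ?thesis by (intro bexI allI impI)
qed

lemma disjointedD:
  assumes "disjointed V E c d \<beta>" and "\<forall>i<c. Bs i \<in> \<beta>"
    and "X \<in> components E (V - (\<Union>i<c. Bs i))"
  obtains Q where "Q \<subseteq> X" and "real (card Q) \<le> d"
    and "\<forall>Y \<in> components E (X - Q). \<exists>i<c. Y \<inter> nbhd V E (Bs i - (\<Union>j<i. Bs j)) = {}"
proof -
  from assms(1) have "(\<forall>i<c. Bs i \<in> \<beta>) \<longrightarrow> (\<forall>X \<in> components E (V - (\<Union>i<c. Bs i)).
        \<exists>Q \<subseteq> X. real (card Q) \<le> d \<and>
          (\<forall>Y \<in> components E (X - Q). \<exists>i<c. Y \<inter> nbhd V E (Bs i - (\<Union>j<i. Bs j)) = {}))"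
    unfolding disjointed_def by (rule spec)
  with assms(2,3) that show ?thesis by blast
qed

text \<open>Stated for every subset of \<open>X - Q\<close>, since it is applied after enlarging \<open>Q\<close>.\<close>

lemma disjointed_separator_of_smaller_tuple:
  assumes "disjointed V E c d \<beta>"
    and "\<forall>i<c. \<tau> i \<in> \<beta>" and "\<forall>i<c. \<tau> i \<subseteq> Bs i"
    and "X \<in> components E (V - (\<Union>i<c. Bs i))"
  obtains Q where "Q \<subseteq> V" and "real (card Q) \<le> d"
    and "\<And>S Y. S \<subseteq> X - Q \<Longrightarrow> Y \<in> components E S \<Longrightarrow>
           \<exists>i<c. Y \<inter> nbhd V E (\<tau> i - (\<Union>j<i. \<tau> j)) = {}"
proof -
  have "V - (\<Union>i<c. Bs i) \<subseteq> V - (\<Union>i<c. \<tau> i)" using assms(3) by blast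
  with assms(4) obtain X' where X': "X' \<in> components E (V - (\<Union>i<c. \<tau> i))" and "X \<subseteq> X'"
    by (rule component_in_supset_component)
  from assms(1,2) X' obtain Q where "Q \<subseteq> X'" and "real (card Q) \<le> d"
    and sep: "\<forall>Y' \<in> components E (X' - Q). \<exists>i<c. Y' \<inter> nbhd V E (\<tau> i - (\<Union>j<i. \<tau> j)) = {}"
    by (rule disjointedD)
  have "Q \<subseteq> V" using \<open>Q \<subseteq> X'\<close> component_subset[OF X'] by blast
  moreover note \<open>real (card Q) \<le> d\<close>
  moreover have "\<exists>i<c. Y \<inter> nbhd V E (\<tau> i - (\<Union>j<i. \<tau> j)) = {}"
    if "S \<subseteq> X - Q" and "Y \<in> components E S" for S Y
  proof -
    have "S \<subseteq> X' - Q" using that(1) \<open>X \<subseteq> X'\<close> by blast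
    with that(2) obtain Y' where "Y' \<in> components E (X' - Q)" and "Y \<subseteq> Y'"
      by (rule component_in_supset_component)
    then obtain i where "i < c" and "Y' \<inter> nbhd V E (\<tau> i - (\<Union>j<i. \<tau> j)) = {}"
      using sep by blast
    with \<open>Y \<subseteq> Y'\<close> show ?thesis by blast
  qed
  ultimately show ?thesis by (rule that)
qed

lemma disjointed_union_family:
  assumes "finite V" and "finite \<beta>" and "0 \<le> d" and "disjointed V E c d \<beta>"
  shows "disjointed V E c (d * real t ^ c) (union_family \<beta> t)"
  unfolding disjointed_def
proof (intro allI impI ballI)
  fix Bs :: "nat \<Rightarrow> 'a set" and X
  assume "\<forall>i<c. Bs i \<in> union_family \<beta> t" and X: "X \<in> components E (V - (\<Union>i<c. Bs i))"
  then have "\<forall>i\<in>{..<c}. \<exists>\<B>. \<B> \<subseteq> \<beta> \<and> card \<B> \<le> t \<and> Bs i = \<Union>\<B>"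
    unfolding union_family_def by blast
  from bchoice[OF this] obtain F where "\<forall>i\<in>{..<c}. F i \<subseteq> \<beta> \<and> card (F i) \<le> t \<and> Bs i = \<Union>(F i)" ..
  then have F: "\<And>i. i < c \<Longrightarrow> F i \<subseteq> \<beta> \<and> card (F i) \<le> t \<and> Bs i = \<Union>(F i)" by simp
  define T where "T = PiE {..<c} F"
  have "finite (F i)" if "i < c" for i using F[OF that] assms(2) finite_subset by blast
  then have "finite T" unfolding T_def by (intro finite_PiE) auto
  have "card T \<le> t ^ c" unfolding T_def using F by (intro card_PiE_lessThan_le_pow) blast
  have "\<forall>\<tau>\<in>T. \<exists>Q. Q \<subseteq> V \<and> real (card Q) \<le> d \<and> (\<forall>S Y. S \<subseteq> X - Q \<longrightarrow> Y \<in> components E S \<longrightarrow>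
           (\<exists>i<c. Y \<inter> nbhd V E (\<tau> i - (\<Union>j<i. \<tau> j)) = {}))"
    (is "\<forall>\<tau>\<in>T. \<exists>Q. ?P \<tau> Q")
  proof
    fix \<tau> assume "\<tau> \<in> T"
    then have "\<forall>i<c. \<tau> i \<in> \<beta>" and "\<forall>i<c. \<tau> i \<subseteq> Bs i" unfolding T_def using F by blast+
    from assms(4) this X obtain Q where "Q \<subseteq> V" and "real (card Q) \<le> d"
      and "\<And>S Y. S \<subseteq> X - Q \<Longrightarrow> Y \<in> components E S \<Longrightarrow>
             \<exists>i<c. Y \<inter> nbhd V E (\<tau> i - (\<Union>j<i. \<tau> j)) = {}"
      by (rule disjointed_separator_of_smaller_tuple) blast
    then show "\<exists>Q. ?P \<tau> Q" by blast
  qed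
  from bchoice[OF this] obtain Qf where Qf: "\<forall>\<tau>\<in>T. Qf \<tau> \<subseteq> V \<and> real (card (Qf \<tau>)) \<le> d \<and>
      (\<forall>S Y. S \<subseteq> X - Qf \<tau> \<longrightarrow> Y \<in> components E S \<longrightarrow>
           (\<exists>i<c. Y \<inter> nbhd V E (\<tau> i - (\<Union>j<i. \<tau> j)) = {}))" ..
  then have Qf_V: "\<And>\<tau>. \<tau> \<in> T \<Longrightarrow> Qf \<tau> \<subseteq> V"
    and Qf_card: "\<And>\<tau>. \<tau> \<in> T \<Longrightarrow> real (card (Qf \<tau>)) \<le> d"
    and Qf_sep: "\<And>\<tau> S Y. \<tau> \<in> T \<Longrightarrow> S \<subseteq> X - Qf \<tau> \<Longrightarrow> Y \<in> components E S \<Longrightarrow>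
           \<exists>i<c. Y \<inter> nbhd V E (\<tau> i - (\<Union>j<i. \<tau> j)) = {}"
    by simp_all
  define Q where "Q = (\<Union>\<tau>\<in>T. X \<inter> Qf \<tau>)"
  show "\<exists>Q \<subseteq> X. real (card Q) \<le> d * real t ^ c \<and>
          (\<forall>Y \<in> components E (X - Q). \<exists>i<c. Y \<inter> nbhd V E (Bs i - (\<Union>j<i. Bs j)) = {})"
  proof (intro exI[of _ Q] conjI ballI)
    show "Q \<subseteq> X" unfolding Q_def by blast
    have "real (card (X \<inter> Qf \<tau>)) \<le> d" if "\<tau> \<in> T" for \<tau>
    proof -
      have "finite (Qf \<tau>)" using Qf_V[OF that] assms(1) by (rule finite_subset)
      then have "card (X \<inter> Qf \<tau>) \<le> card (Qf \<tau>)" by (simp add: card_mono)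
      with Qf_card[OF that] show ?thesis by linarith
    qed
    then have "real (card Q) \<le> real (card T) * d" unfolding Q_def by (rule card_UN_le_mult[OF \<open>finite T\<close>])
    also have "\<dots> \<le> d * real t ^ c"
      using \<open>card T \<le> t ^ c\<close> assms(3) by (simp add: mult.commute mult_left_mono flip: of_nat_power)
    finally show "real (card Q) \<le> d * real t ^ c" .
  next
    fix Y assume Y: "Y \<in> components E (X - Q)"
    show "\<exists>i<c. Y \<inter> nbhd V E (Bs i - (\<Union>j<i. Bs j)) = {}"
    proof (rule ccontr)
      assume "\<not> ?thesis"
      then have "\<And>i. i < c \<Longrightarrow> Y \<inter> nbhd V E (Bs i - (\<Union>j<i. Bs j)) \<noteq> {}" by blast
      with F obtain \<tau> where "\<tau> \<in> T" and meets: "\<forall>i<c. Y \<inter> nbhd V E (\<tau> i - (\<Union>j<i. \<tau> j)) \<noteq> {}"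
        unfolding T_def using meets_nbhd_choice[of c Bs F Y V E] by blast
      have "X - Q \<subseteq> X - Qf \<tau>" unfolding Q_def using \<open>\<tau> \<in> T\<close> by blast
      from Qf_sep[OF \<open>\<tau> \<in> T\<close> this Y] meets show False by blast
    qed
  qed
qed

theorem lemma3p3:
  fixes V :: "'a set" and E :: "'a \<Rightarrow> 'a \<Rightarrow> bool" and l c d :: nat and \<beta> :: "'a set set"
  assumes "simple_graph V E"
    and "l \<ge> 1" and "c \<ge> 1" and "d \<ge> 1"
    and "covering V l \<beta>"
    and "disjointed V E c (real d) \<beta>"
  shows "disjointed_fun V E c (\<lambda>t. real d * real t ^ c) \<beta>"
proof -
  have "finite V" using assms(1) unfolding simple_graph_def by blast
  moreover have "finite \<beta>"
    using assms(5) \<open>finite V\<close> unfolding covering_def by (meson finite_Pow_iff finite_subset)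
  ultimately show ?thesis
    unfolding disjointed_fun_def using disjointed_union_family[OF _ _ _ assms(6)] by simp
qed

end
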